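(* Let $n,x$ be integers with $1<x<n$, so that $G=C_{2n}(x,1,n)$ is a $5$-regular circulant graph. If $n\equiv 2\pmod 3$, $x\equiv 1\pmod 3$ and $1<x\leq \tfrac{2n}{3}$, then $G$ is word-representable.
   Context: Two distinct letters $x,y$ alternate in a word $w$ if, after deleting all other letters from $w$, the resulting word is of the form $xyxy\cdots$ or $yxyx\cdots$ (of even or odd length). A graph $G=(V,E)$ is word-representable if there is a word $w$ over the alphabet $V$, containing every letter of $V$ at least once, such that for all distinct $x,y\in V$, $xy\in E$ if and only if $x$ and $y$ alternate in $w$. For an integer $m$ and a set $R$ of positive integers each at most $m/2$, the circulant graph $C_m(R)$ has vertex set $\{0,1,\dots,m-1\}$, with $i$ and $j$ adjacent iff $\min(|i-j|,\,m-|i-j|)\in R$. $C_{2n}(x,1,n)$ denotes the circulant graph on $2n$ vertices with jump set $\{1,x,n\}$; it is $5$-regular exactly when $1<x<n$. *)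

theory Defs
  imports Main
begin

definition alternate :: "'a list \<Rightarrow> 'a \<Rightarrow> 'a \<Rightarrow> bool" where
  "alternate w x y \<longleftrightarrow>
     (let u = filter (\<lambda>z. z = x \<or> z = y) w in
        \<forall>i. Suc i < length u \<longrightarrow> u ! i \<noteq> u ! Suc i)"

definition word_representable :: "'a set \<Rightarrow> ('a \<Rightarrow> 'a \<Rightarrow> bool) \<Rightarrow> bool" where
  "word_representable V E \<longleftrightarrow>
     (\<exists>w. set w = V \<and>
        (\<forall>x\<in>V. \<forall>y\<in>V. x \<noteq> y \<longrightarrow> (E x y \<longleftrightarrow> alternate w x y)))"

definition circ_vertices :: "nat \<Rightarrow> nat set" where
  "circ_vertices m = {0..<m}"

definition circ_adj :: "nat \<Rightarrow> nat set \<Rightarrow> nat \<Rightarrow> nat \<Rightarrow> bool" where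
  "circ_adj m R i j \<longleftrightarrow>
     (let d = (if i \<le> j then j - i else i - j) in min d (m - d) \<in> R)"

end

theory Submission
  imports Defs
begin

text \<open>If \<open>n \<noteq> 2x\<close>, the graph is 3-colourable: for a multiplier \<open>K \<equiv> 5 (mod 6)\<close> with
  \<open>K < 2n\<close> and \<open>\<lfloor>xK/2n\<rfloor> \<equiv> 0 (mod 3)\<close>, the colouring \<open>i \<mapsto> (i + \<lfloor>iK/2n\<rfloor>) mod 3\<close> is
  \<open>2n\<close>-periodic and changes along each of the jumps \<open>1\<close>, \<open>x\<close> and \<open>n\<close>. Such a \<open>K\<close> is found
  in the progression \<open>12t + 5\<close> or \<open>12t + 11\<close> (depending on the sign of \<open>n - 2x\<close>), and every
  3-colourable graph is word-representable by an explicit word built from its colour classes.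
  If \<open>n = 2x\<close>, the graph contains copies of \<open>K\<^sub>4\<close>; in the coordinates \<open>(i mod x, i div x)\<close>
  it is represented by an explicit word that is checked column by column.\<close>

lemma alternate_iff_successively:
  "alternate w a b \<longleftrightarrow> successively (\<noteq>) (filter (\<lambda>z. z = a \<or> z = b) w)"
  unfolding alternate_def Let_def successively_conv_nth by blast

lemma alternate_commute: "alternate w a b \<longleftrightarrow> alternate w b a"
  unfolding alternate_iff_successively by (simp add: disj_commute)

lemma alternate_map_inj:
  assumes "inj_on f (set w \<union> {a, b})"
  shows "alternate (map f w) (f a) (f b) \<longleftrightarrow> alternate w a b"
proof -
  have f_eq: "f z = f c \<longleftrightarrow> z = c" if "z \<in> set w" "c \<in> set w \<union> {a, b}" for z c
    using inj_onD[OF assms] that by auto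
  have "filter (\<lambda>z. z = f a \<or> z = f b) (map f w) = map f (filter (\<lambda>z. z = a \<or> z = b) w)"
    unfolding filter_map o_def by (intro arg_cong[where f = "map f"] filter_cong) (auto simp: f_eq)
  moreover have "successively (\<noteq>) (map f l) \<longleftrightarrow> successively (\<noteq>) l" if "set l \<subseteq> set w" for l
    unfolding successively_map using that by (intro successively_cong refl) (metis f_eq UnI1 subsetD)
  ultimately show ?thesis
    unfolding alternate_iff_successively by simp
qed

lemma successively_concat_copies:
  assumes "successively R w" "w \<noteq> [] \<Longrightarrow> R (last w) (hd w)" "\<forall>l\<in>set ls. l = w"
  shows "successively R (concat ls)"
  using assms(3)
proof (induction ls)
  case (Cons l ls)
  then have "l = w" "successively R (concat ls)" by simp_all
  moreover have "concat ls = [] \<or> hd (concat ls) = hd w"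
    using Cons.prems by (cases ls) (auto simp: hd_append concat_eq_Nil_conv)
  ultimately show ?case
    using assms(1,2) by (auto simp: successively_append_iff)
qed simp

lemma not_successively_concat:
  assumes "l \<in> set ls" "\<not> successively R l"
  shows "\<not> successively R (concat ls)"
proof -
  obtain xs ys where "ls = xs @ l # ys" using assms(1) by (meson split_list)
  then show ?thesis using assms(2) by (simp add: successively_append_iff)
qed

section \<open>Three-colourable graphs are word-representable\<close>

lemma filter_pair_sorted_list_of_set:
  fixes u v :: "'a::linorder"
  assumes "finite V" "u \<in> V" "v \<in> V" "u \<noteq> v"
  shows "filter (\<lambda>z. Q z \<and> (z = u \<or> z = v)) (sorted_list_of_set V) =
    filter Q (if u < v then [u, v] else [v, u])"
  using assms
  by (intro sorted_distinct_set_unique) (auto intro: sorted_wrt_filter)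

locale three_coloured_graph =
  fixes V :: "'a::linorder set" and E :: "'a \<Rightarrow> 'a \<Rightarrow> bool" and col :: "'a \<Rightarrow> nat"
  assumes finite_vertices: "finite V"
    and symmetric: "symp E"
    and colour_range: "v \<in> V \<Longrightarrow> col v < 3"
    and proper: "u \<in> V \<Longrightarrow> v \<in> V \<Longrightarrow> u \<noteq> v \<Longrightarrow> E u v \<Longrightarrow> col u \<noteq> col v"
begin

text \<open>The order on the vertices only serves to list the colour classes.\<close>

definition colour_class :: "nat \<Rightarrow> 'a list" where
  "colour_class k = filter (\<lambda>v. col v = k) (sorted_list_of_set V)"

definition base_block :: "'a list" where
  "base_block = colour_class 2 @ colour_class 0 @ colour_class 1 @
     colour_class 2 @ rev (colour_class 0) @ rev (colour_class 1)"

definition class0_block :: "'a \<Rightarrow> 'a list" where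
  "class0_block a = colour_class 2 @ filter (\<lambda>y. y \<noteq> a) (colour_class 0) @
     filter (\<lambda>b. \<not> E a b) (colour_class 1) @ [a] @ filter (E a) (colour_class 1) @
     colour_class 2 @ colour_class 0 @ colour_class 1"

definition class2_block :: "'a \<Rightarrow> 'a list" where
  "class2_block c = filter (\<lambda>y. y \<noteq> c) (colour_class 2) @ filter (\<lambda>a. \<not> E c a) (colour_class 0) @
     [c] @ filter (E c) (colour_class 0) @ filter (E c) (colour_class 1) @
     [c] @ filter (\<lambda>b. \<not> E c b) (colour_class 1) @
     filter (\<lambda>y. y \<noteq> c) (colour_class 2) @ colour_class 0 @ colour_class 1"

text \<open>Restricted to an edge, every block reads \<open>pqpq\<close> for the same \<open>p\<close> and \<open>q\<close> (\<open>p\<close> the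
  endpoint of colour 2 if there is one); restricted to a non-edge, some block repeats a letter.\<close>

definition blocks :: "'a list list" where
  "blocks = base_block # map class0_block (colour_class 0) @ map class2_block (colour_class 2)"

lemma mem_colour_class [simp]: "z \<in> set (colour_class k) \<longleftrightarrow> z \<in> V \<and> col z = k"
  using finite_vertices by (simp add: colour_class_def)

lemma set_concat_blocks: "set (concat blocks) = V"
  using colour_range finite_vertices
  by (fastforce simp: blocks_def base_block_def class0_block_def class2_block_def colour_class_def)

lemma filter_pair_colour_class:
  assumes "u \<in> V" "v \<in> V" "u \<noteq> v"
  shows "filter (\<lambda>z. Q z \<and> (z = u \<or> z = v)) (colour_class k) =
    filter (\<lambda>z. col z = k \<and> Q z) (if u < v then [u, v] else [v, u])"
  unfolding colour_class_def filter_filter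
  using filter_pair_sorted_list_of_set[OF finite_vertices assms, of "\<lambda>z. col z = k \<and> Q z"]
  by (simp add: conj_assoc)

lemmas filter_pair_blocks_simps =
  filter_pair_colour_class filter_pair_colour_class[where Q = "\<lambda>_. True", simplified]
  rev_filter[symmetric] filter_filter

lemma alternate_if_adjacent:
  assumes "u \<in> V" "v \<in> V" "u \<noteq> v" "E u v" "col u < col v"
  shows "alternate (concat blocks) u v"
proof -
  let ?P = "\<lambda>z. z = u \<or> z = v"
  have "E v u" using assms(4) symmetric by (blast dest: sympD)
  consider "col u = 0" "col v = 1" | "col u < 2" "col v = 2"
    using assms(5) colour_range[OF assms(2)] by linarith
  then have "\<exists>p q. p \<noteq> q \<and> (\<forall>b\<in>set blocks. filter ?P b = [p, q, p, q])"
  proof cases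
    case 1
    then show ?thesis using assms \<open>E v u\<close>
      by (intro exI[of _ u] exI[of _ v])
        (auto simp: blocks_def base_block_def class0_block_def class2_block_def filter_pair_blocks_simps)
  next
    case 2
    then show ?thesis using assms \<open>E v u\<close>
      by (intro exI[of _ v] exI[of _ u])
        (auto simp: blocks_def base_block_def class0_block_def class2_block_def filter_pair_blocks_simps)
  qed
  then obtain p q where "p \<noteq> q" "\<forall>b\<in>set blocks. filter ?P b = [p, q, p, q]"
    by blast
  then show ?thesis
    unfolding alternate_iff_successively filter_concat
    by (intro successively_concat_copies[where w = "[p, q, p, q]"]) auto
qed

lemma not_alternate_if_not_adjacent:
  assumes "u \<in> V" "v \<in> V" "u \<noteq> v" "\<not> E u v" "col u \<le> col v"
  shows "\<not> alternate (concat blocks) u v"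
proof -
  let ?P = "\<lambda>z. z = u \<or> z = v"
  have "\<not> E v u" using assms(4) symmetric by (blast dest: sympD)
  consider "col u = col v" "col v < 2" | "col u = 2" "col v = 2" | "col u = 0" "col v = 1"
    | "col u < 2" "col v = 2"
    using assms(5) colour_range[OF assms(2)] by linarith
  then have "\<exists>b\<in>set blocks. \<not> successively (\<noteq>) (filter ?P b)"
  proof cases
    case 1
    then show ?thesis using assms
      by (intro bexI[of _ base_block]) (auto simp: blocks_def base_block_def filter_pair_blocks_simps)
  next
    case 2
    then show ?thesis using assms
      by (intro bexI[of _ "class2_block u"]) (auto simp: blocks_def class2_block_def filter_pair_blocks_simps)
  next
    case 3
    then show ?thesis using assms
      by (intro bexI[of _ "class0_block u"]) (auto simp: blocks_def class0_block_def filter_pair_blocks_simps)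
  next
    case 4
    then show ?thesis using assms \<open>\<not> E v u\<close>
      by (intro bexI[of _ "class2_block v"]) (auto simp: blocks_def class2_block_def filter_pair_blocks_simps)
  qed
  then show ?thesis
    unfolding alternate_iff_successively filter_concat
    using not_successively_concat[of "filter ?P _" "map (filter ?P) blocks"] by auto
qed

theorem word_representable: "word_representable V E"
  unfolding word_representable_def
proof (intro exI[of _ "concat blocks"] conjI ballI impI)
  have ordered: "E u v \<longleftrightarrow> alternate (concat blocks) u v"
    if "u \<in> V" "v \<in> V" "u \<noteq> v" "col u \<le> col v" for u v
  proof
    assume "E u v"
    then have "col u < col v" using that proper by fastforce
    then show "alternate (concat blocks) u v"
      using alternate_if_adjacent \<open>E u v\<close> that by blast
  qed (use not_alternate_if_not_adjacent that in blast)
  fix u v assume uv: "u \<in> V" "v \<in> V" "u \<noteq> v"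
  show "E u v \<longleftrightarrow> alternate (concat blocks) u v"
  proof (cases "col u \<le> col v")
    case False
    have "E u v \<longleftrightarrow> E v u" using symmetric by (blast dest: sympD)
    with False show ?thesis using ordered[of v u] uv alternate_commute by simp
  qed (use ordered uv in blast)
qed (rule set_concat_blocks)

end

section \<open>A periodic 3-colouring of circulant graphs\<close>

lemma circ_adj_commute: "circ_adj m R u v \<longleftrightarrow> circ_adj m R v u"
  unfolding circ_adj_def Let_def by auto

lemma circ_adj_iff:
  assumes "u < m" "v < m" "\<forall>r\<in>R. 2 * r \<le> m"
  shows "circ_adj m R u v \<longleftrightarrow>
    (\<exists>r\<in>R. v = u + r \<or> u = v + r \<or> v + m = u + r \<or> u + m = v + r)"
proof
  assume "circ_adj m R u v"
  then obtain r where "r \<in> R"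
    "r = min (if u \<le> v then v - u else u - v) (m - (if u \<le> v then v - u else u - v))"
    unfolding circ_adj_def Let_def by auto
  then show "\<exists>r\<in>R. v = u + r \<or> u = v + r \<or> v + m = u + r \<or> u + m = v + r"
    using assms by (intro bexI[of _ r]) (auto simp: min_def split: if_splits)
next
  assume "\<exists>r\<in>R. v = u + r \<or> u = v + r \<or> v + m = u + r \<or> u + m = v + r"
  then obtain r where r: "r \<in> R" "v = u + r \<or> u = v + r \<or> v + m = u + r \<or> u + m = v + r"
    by blast
  with assms have "min (if u \<le> v then v - u else u - v) (m - (if u \<le> v then v - u else u - v)) = r"
    by (auto simp: min_def)
  then show "circ_adj m R u v" unfolding circ_adj_def Let_def using r by simp
qed

lemma circ_adj_colours_differ:
  assumes periodic: "\<And>i. col (i + m) = col i"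
    and steps: "\<And>i r. r \<in> R \<Longrightarrow> col (i + r) \<noteq> col i"
    and "\<forall>r\<in>R. 2 * r \<le> m" "u < m" "v < m" "circ_adj m R u v"
  shows "col u \<noteq> col v"
proof -
  obtain r where "r \<in> R" "v = u + r \<or> u = v + r \<or> v + m = u + r \<or> u + m = v + r"
    using circ_adj_iff assms(3-6) by blast
  then show ?thesis
    using steps[of r u] steps[of r v] periodic[of u] periodic[of v] by auto
qed

definition floor_colour :: "nat \<Rightarrow> nat \<Rightarrow> nat \<Rightarrow> nat" where
  "floor_colour m K i = (i + i * K div m) mod 3"

lemma floor_colour_add_period:
  assumes "0 < m" "(m + K) mod 3 = 0"
  shows "floor_colour m K (i + m) = floor_colour m K i"
proof -
  have "(i + m) * K div m = i * K div m + K"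
    using assms(1) by (simp add: add_mult_distrib)
  moreover obtain q where "m + K = 3 * q"
    using assms(2) by auto
  ultimately have sum: "i + m + (i + m) * K div m = (i + i * K div m) + 3 * q"
    by simp
  show ?thesis
    unfolding floor_colour_def sum by simp
qed

lemma floor_colour_add_step:
  assumes "0 < m" "(r + r * K div m) mod 3 = 1"
  shows "floor_colour m K (i + r) \<noteq> floor_colour m K i"
proof -
  define carry where "carry = (i * K mod m + r * K mod m) div m"
  have "i * K mod m < m" "r * K mod m < m"
    using assms(1) by simp_all
  then have "carry < 2"
    unfolding carry_def by (intro less_mult_imp_div_less) linarith
  have "(i + r) * K div m = i * K div m + r * K div m + carry"
    unfolding carry_def add_mult_distrib by (rule div_add1_eq)
  moreover define a b where "a = i + i * K div m" and "b = r + r * K div m"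
  ultimately have sum: "i + r + (i + r) * K div m = a + b + carry"
    by simp
  have "(a + b + carry) mod 3 \<noteq> a mod 3"
    using assms(2) \<open>carry < 2\<close> unfolding b_def[symmetric] by presburger
  then show ?thesis
    unfolding floor_colour_def sum a_def[symmetric] .
qed

lemma arithmetic_progression_hits_window:
  fixes a p c L :: nat
  assumes "0 < a" "c < p"
  obtains t where "L < a * (p * t + c)" "a * (p * t + c) \<le> L + a * p"
proof -
  define P where "P t \<longleftrightarrow> L < a * (p * t + c)" for t
  have "Suc L \<le> p * Suc L" using assms(2) by (cases p) simp_all
  also have "\<dots> \<le> p * Suc L + c" by simp
  also have "\<dots> \<le> a * (p * Suc L + c)" using assms(1) by simp
  finally have "P (Suc L)" unfolding P_def by simp
  define t where "t = (LEAST t. P t)"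
  have "P t" unfolding t_def by (rule LeastI) fact
  moreover have "a * (p * t + c) \<le> L + a * p"
  proof (cases t)
    case 0
    then have "a * (p * t + c) = a * c" by simp
    also have "\<dots> \<le> a * p" using assms(2) by (intro mult_le_mono2) simp
    finally show ?thesis by linarith
  next
    case (Suc t')
    then have "\<not> P t'" unfolding t_def by (metis lessI not_less_Least)
    then show ?thesis unfolding P_def Suc by (simp add: algebra_simps)
  qed
  ultimately show ?thesis using that unfolding P_def by blast
qed

text \<open>With \<open>3d = |n - 2x|\<close>, the multiplier \<open>K = 12t + c\<close> is chosen with \<open>n < 3dK \<le> n + 36d \<le> 5n\<close>;
  then \<open>2xK = nK \<mp> 3dK\<close> lies in a window of length \<open>4n\<close> just above a multiple of \<open>12n\<close>.\<close>

lemma multiplier_if_2x_less: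
  fixes n x d :: nat
  assumes "n = 2 * x + 3 * d" "0 < d" "9 * d \<le> n"
  obtains t where "12 * t + 5 < 2 * n" "x * (12 * t + 5) div (2 * n) = 3 * t"
proof -
  obtain t where window: "n < 3 * d * (12 * t + 5)" "3 * d * (12 * t + 5) \<le> n + 3 * d * 12"
    using arithmetic_progression_hits_window[of "3 * d" 5 12 n] assms(2) by auto
  define K where "K = 12 * t + 5"
  have "n * K = 2 * (x * K) + 3 * (d * K)" "n * K = 12 * (n * t) + 5 * n"
    unfolding K_def using assms(1) by (simp_all add: algebra_simps)
  moreover have "n < 3 * (d * K)" "3 * (d * K) \<le> n + 36 * d"
    using window unfolding K_def by (simp_all add: algebra_simps)
  ultimately have "6 * (n * t) \<le> x * K" "x * K < 6 * (n * t) + 2 * n"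
    using assms(3) by linarith+
  then have "x * K div (2 * n) = 3 * t"
    by (intro div_nat_eqI) (simp_all add: algebra_simps)
  moreover have "K \<le> d * K" using assms(2) by simp
  then have "K < 2 * n"
    using \<open>3 * (d * K) \<le> n + 36 * d\<close> \<open>n < 3 * (d * K)\<close> assms(3) by linarith
  ultimately show ?thesis
    using that[of t] unfolding K_def by blast
qed

lemma multiplier_if_less_2x:
  fixes n x d :: nat
  assumes "2 * x = n + 3 * d" "0 < d" "9 * d \<le> n" "n mod 3 = 2"
  obtains t where "12 * t + 11 < 2 * n" "x * (12 * t + 11) div (2 * n) = 3 * t + 3"
proof -
  obtain t where window: "n < 3 * d * (12 * t + 11)" "3 * d * (12 * t + 11) \<le> n + 3 * d * 12"
    using arithmetic_progression_hits_window[of "3 * d" 11 12 n] assms(2) by auto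
  define K where "K = 12 * t + 11"
  obtain p where "n = 3 * p + 2" using assms(4) by (metis div_mult_mod_eq mult.commute)
  then have "3 * (d * K) \<noteq> 5 * n" by presburger
  have "2 * (x * K) = n * K + 3 * (d * K)"
    using arg_cong[OF assms(1), of "\<lambda>z. z * K"] by (simp add: algebra_simps)
  moreover have "n * K = 12 * (n * t) + 11 * n"
    unfolding K_def by (simp add: algebra_simps)
  moreover have "n < 3 * (d * K)" "3 * (d * K) \<le> n + 36 * d"
    using window unfolding K_def by (simp_all add: algebra_simps)
  ultimately have "6 * (n * t) + 6 * n \<le> x * K" "x * K < 6 * (n * t) + 8 * n"
    using assms(3) \<open>3 * (d * K) \<noteq> 5 * n\<close> by linarith+
  then have "x * K div (2 * n) = 3 * t + 3"
    by (intro div_nat_eqI) (simp_all add: algebra_simps)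
  moreover have "K \<le> d * K" using assms(2) by simp
  then have "K < 2 * n"
    using \<open>3 * (d * K) \<le> n + 36 * d\<close> \<open>n < 3 * (d * K)\<close> assms(3) by linarith
  ultimately show ?thesis
    using that[of t] unfolding K_def by blast
qed

lemma multiplier_exists:
  fixes n x :: nat
  assumes "n mod 3 = 2" "x mod 3 = 1" "3 * x \<le> 2 * n" "2 * x \<noteq> n"
  obtains K where "K mod 6 = 5" "K < 2 * n" "(x * K div (2 * n)) mod 3 = 0"
proof -
  obtain p where p: "n = 3 * p + 2" using assms(1) by (metis div_mult_mod_eq mult.commute)
  obtain q where q: "x = 3 * q + 1" using assms(2) by (metis div_mult_mod_eq mult.commute)
  have "5 * x \<noteq> 2 * n"
  proof
    assume "5 * x = 2 * n"
    then have "(5 * (x mod 3)) mod 3 = (2 * (n mod 3)) mod 3" by (metis mod_mult_right_eq)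
    then show False using assms(1,2) by simp
  qed
  then consider "5 * x < 2 * n" | "2 * n < 5 * x" "2 * x < n" | "n < 2 * x"
    using assms(4) by linarith
  then show ?thesis
  proof cases
    case 1
    then show ?thesis using q by (intro that[of 5]) simp_all
  next
    case 2
    then have "n = 2 * x + 3 * (p - 2 * q)" "0 < p - 2 * q" "9 * (p - 2 * q) \<le> n"
      using p q by linarith+
    then obtain t where "12 * t + 5 < 2 * n" "x * (12 * t + 5) div (2 * n) = 3 * t"
      by (rule multiplier_if_2x_less)
    moreover have "(12 * t + 5) mod 6 = 5" by presburger
    ultimately show ?thesis using that by simp
  next
    case 3
    then have "2 * x = n + 3 * (2 * q - p)" "0 < 2 * q - p" "9 * (2 * q - p) \<le> n"
      using p q assms(3) by linarith+
    then obtain t where "12 * t + 11 < 2 * n" "x * (12 * t + 11) div (2 * n) = 3 * t + 3"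
      using assms(1) by (rule multiplier_if_less_2x)
    moreover have "(12 * t + 11) mod 6 = 5" by presburger
    ultimately show ?thesis using that by simp
  qed
qed

lemma circ_adj_floor_colours_differ:
  assumes "x < n" "n mod 3 = 2" "x mod 3 = 1"
    and "K mod 6 = 5" "K < 2 * n" "(x * K div (2 * n)) mod 3 = 0"
    and "u < 2 * n" "v < 2 * n" "circ_adj (2 * n) {1, x, n} u v"
  shows "floor_colour (2 * n) K u \<noteq> floor_colour (2 * n) K v"
proof (rule circ_adj_colours_differ[where col = "floor_colour (2 * n) K" and m = "2 * n" and R = "{1, x, n}"])
  obtain p where p: "n = 3 * p + 2" using assms(2) by (metis div_mult_mod_eq mult.commute)
  obtain q where q: "x = 3 * q + 1" using assms(3) by (metis div_mult_mod_eq mult.commute)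
  obtain s where s: "K = 6 * s + 5" using assms(4) by (metis div_mult_mod_eq mult.commute)
  obtain c where c: "x * K div (2 * n) = 3 * c" using assms(6) by (auto elim: dvdE simp: dvd_eq_mod_eq_0[symmetric])
  have "0 < 2 * n" using p by simp
  have "2 * n + K = 3 * (2 * p + 2 * s + 3)" using p s by simp
  then show "floor_colour (2 * n) K (i + 2 * n) = floor_colour (2 * n) K i" for i
    using \<open>0 < 2 * n\<close> by (intro floor_colour_add_period) simp_all
  have "n * K div (2 * n) = 3 * s + 2" using \<open>0 < 2 * n\<close> s by simp
  have "(r + r * K div (2 * n)) mod 3 = 1" if "r \<in> {1, x, n}" for r
  proof -
    have "\<exists>k. r + r * K div (2 * n) = 3 * k + 1"
      using that assms(5) p q c \<open>n * K div (2 * n) = 3 * s + 2\<close>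
      by (auto intro: exI[of _ 0] exI[of _ "q + c"] exI[of _ "p + s + 1"])
    then show ?thesis by auto
  qed
  then show "floor_colour (2 * n) K (i + r) \<noteq> floor_colour (2 * n) K i" if "r \<in> {1, x, n}" for i r
    using \<open>0 < 2 * n\<close> that by (intro floor_colour_add_step) auto
qed (use assms(1,7-9) in auto)

section \<open>The circulant graph \<open>C\<^sub>4\<^sub>x(1, x, 2x)\<close>\<close>

lemma concat_map_filter_Nil:
  assumes "\<And>i. i \<in> set l \<Longrightarrow> \<not> Q i \<Longrightarrow> F i = []"
  shows "concat (map F (filter Q l)) = concat (map F l)"
  using assms by (induction l) auto

lemma concat_map_upt_sparse:
  assumes "sorted cs" "distinct cs" "set cs \<subseteq> {..<N}"
    and "\<And>i. i < N \<Longrightarrow> i \<notin> set cs \<Longrightarrow> F i = []"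
  shows "concat (map F [0..<N]) = concat (map F cs)"
proof -
  have "filter (\<lambda>i. i \<in> set cs) [0..<N] = cs"
    using assms(1-3) by (intro sorted_distinct_set_unique) (auto intro: sorted_wrt_filter)
  then show ?thesis
    using concat_map_filter_Nil[of "[0..<N]" "\<lambda>i. i \<in> set cs" F] assms(4) by simp
qed

text \<open>Vertex \<open>s + kx\<close> of \<open>C\<^sub>4\<^sub>x(1, x, 2x)\<close> gets the coordinates \<open>(s, k)\<close>, \<open>s < x\<close>, \<open>k < 4\<close>.
  Each column \<open>s\<close> is a \<open>K\<^sub>4\<close>, consecutive columns are joined level by level, and the jump
  from column \<open>x - 1\<close> back to column \<open>0\<close> raises the level by one. A column block lists
  column \<open>s\<close> from level \<open>q\<close> on, followed by the vertex preceding \<open>(s, q)\<close> on the cycle.\<close>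

definition column_block :: "nat \<Rightarrow> nat \<Rightarrow> nat \<Rightarrow> (nat \<times> nat) list" where
  "column_block x q s = [(s, q), (s, (q + 1) mod 4), (s, (q + 2) mod 4), (s, (q + 3) mod 4),
     if s = 0 then (x - 1, (q + 3) mod 4) else (s - 1, q)]"

definition prism_word :: "nat \<Rightarrow> (nat \<times> nat) list" where
  "prism_word x = concat (map (\<lambda>q. concat (map (column_block x q) [0..<x])) [0..<4])"

fun prism_adj :: "nat \<Rightarrow> nat \<times> nat \<Rightarrow> nat \<times> nat \<Rightarrow> bool" where
  "prism_adj x (g, a) (h, b) \<longleftrightarrow>
     (g = h \<and> a \<noteq> b) \<or> (h = Suc g \<and> a = b) \<or> (g = Suc h \<and> a = b) \<or>
     (g = 0 \<and> h = x - 1 \<and> a = (b + 1) mod 4) \<or> (h = 0 \<and> g = x - 1 \<and> b = (a + 1) mod 4)"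

lemma mem_column_block:
  assumes "q < 4"
  shows "(p, k) \<in> set (column_block x q s) \<longleftrightarrow>
    (p = s \<and> k < 4) \<or> (s \<noteq> 0 \<and> p = s - 1 \<and> k = q) \<or> (s = 0 \<and> p = x - 1 \<and> k = (q + 3) mod 4)"
  using assms unfolding column_block_def
  by (cases "q = 0"; cases "q = 1"; cases "q = 2"; cases "q = 3"; auto)

lemma column_block_simps:
  "column_block x 0 s = [(s,0), (s,1), (s,2), (s,3), if s = 0 then (x - 1, 3) else (s - 1, 0)]"
  "column_block x (Suc 0) s = [(s,1), (s,2), (s,3), (s,0), if s = 0 then (x - 1, 0) else (s - 1, 1)]"
  "column_block x 2 s = [(s,2), (s,3), (s,0), (s,1), if s = 0 then (x - 1, 1) else (s - 1, 2)]"
  "column_block x 3 s = [(s,3), (s,0), (s,1), (s,2), if s = 0 then (x - 1, 2) else (s - 1, 3)]"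
  by (simp_all add: column_block_def)

lemma set_prism_word:
  assumes "0 < x"
  shows "set (prism_word x) = {(s, k). s < x \<and> k < 4}"
proof (intro equalityI subsetI; clarify)
  fix s k assume "(s, k) \<in> set (prism_word x)"
  then obtain q s' where "q < 4" "s' < x" "(s, k) \<in> set (column_block x q s')"
    unfolding prism_word_def by auto
  then show "s < x \<and> k < 4" using assms by (auto simp: mem_column_block)
next
  fix s k :: nat assume "s < x" "k < 4"
  then have "(s, k) \<in> set (column_block x k s)" by (simp add: mem_column_block)
  with \<open>s < x\<close> \<open>k < 4\<close> show "(s, k) \<in> set (prism_word x)"
    unfolding prism_word_def by force
qed

lemma nat_less_4_cases: "(a::nat) < 4 \<Longrightarrow> (a = 0 \<Longrightarrow> P) \<Longrightarrow> (a = 1 \<Longrightarrow> P) \<Longrightarrow> (a = 2 \<Longrightarrow> P) \<Longrightarrow> (a = 3 \<Longrightarrow> P) \<Longrightarrow> P"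
  by linarith

lemma filter_prism_word_pair:
  assumes "sorted cs" "distinct cs" "set cs \<subseteq> {..<x}"
    and "\<And>s. s < x \<Longrightarrow> s \<notin> set cs \<Longrightarrow>
      s \<noteq> g \<and> s \<noteq> Suc g \<and> s \<noteq> h \<and> s \<noteq> Suc h \<and> (s = 0 \<longrightarrow> g \<noteq> x - 1 \<and> h \<noteq> x - 1)"
  shows "filter (\<lambda>z. z = (g, a) \<or> z = (h, b)) (prism_word x) =
    concat (map (\<lambda>q. concat (map (\<lambda>s. filter (\<lambda>z. z = (g, a) \<or> z = (h, b)) (column_block x q s)) cs))
      [0, 1, 2, 3])"
proof -
  let ?P = "\<lambda>z. z = (g, a) \<or> z = (h, b)"
  have "[0..<4] = [0, 1, 2, 3::nat]" by (simp add: upt_rec)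
  moreover have "concat (map (\<lambda>s. filter ?P (column_block x q s)) [0..<x]) =
      concat (map (\<lambda>s. filter ?P (column_block x q s)) cs)" if "q < 4" for q
  proof (rule concat_map_upt_sparse[OF assms(1-3)])
    fix s assume "s < x" "s \<notin> set cs"
    then show "filter ?P (column_block x q s) = []"
      using assms(4)[of s] that by (auto simp: filter_empty_conv mem_column_block)
  qed
  ultimately show ?thesis
    unfolding prism_word_def filter_concat map_map o_def by simp
qed

text \<open>Only the columns in the list \<open>cs\<close> of each case contain \<open>(g, a)\<close> or \<open>(h, b)\<close>; what
  remains is a finite check over the 16 choices of levels.\<close>

lemma alternate_prism_word_ordered:
  assumes "4 \<le> x" "g < x" "h < x" "a < 4" "b < 4" "(g, a) \<noteq> (h, b)" "g \<le> h"
  shows "alternate (prism_word x) (g, a) (h, b) \<longleftrightarrow> prism_adj x (g, a) (h, b)"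
proof -
  let ?P = "\<lambda>z. z = (g, a) \<or> z = (h, b)"
  let ?F = "\<lambda>cs. concat (map (\<lambda>q. concat (map (\<lambda>s. filter ?P (column_block x q s)) cs)) [0, 1, 2, 3])"
  consider "g = h" "Suc g < x" | "g = h" "Suc g = x"
    | "h = Suc g" "Suc h < x" | "h = Suc g" "Suc h = x" | "Suc g < h" "Suc h < x"
    | "Suc g < h" "Suc h = x" "0 < g" | "g = 0" "Suc g < h" "Suc h = x"
    using assms(2,3,7) by linarith
  then show ?thesis
  proof cases
    case 1
    then have "filter ?P (prism_word x) = ?F [g, Suc g]"
      using assms(1) by (intro filter_prism_word_pair) auto
    with assms 1 show ?thesis unfolding alternate_iff_successively
      by (elim nat_less_4_cases) (auto simp: column_block_simps)
  next
    case 2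
    then have "filter ?P (prism_word x) = ?F [0, g]"
      using assms(1) by (intro filter_prism_word_pair) auto
    with assms 2 show ?thesis unfolding alternate_iff_successively
      by (elim nat_less_4_cases) (auto simp: column_block_simps)
  next
    case 3
    then have "filter ?P (prism_word x) = ?F [g, h, Suc h]"
      using assms(1) by (intro filter_prism_word_pair) auto
    with assms 3 show ?thesis unfolding alternate_iff_successively
      by (elim nat_less_4_cases) (auto simp: column_block_simps)
  next
    case 4
    then have "filter ?P (prism_word x) = ?F [0, g, h]"
      using assms(1) by (intro filter_prism_word_pair) auto
    with assms 4 show ?thesis unfolding alternate_iff_successively
      by (elim nat_less_4_cases) (auto simp: column_block_simps)
  next
    case 5
    then have "filter ?P (prism_word x) = ?F [g, Suc g, h, Suc h]"
      using assms(1) by (intro filter_prism_word_pair) auto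
    with assms 5 show ?thesis unfolding alternate_iff_successively
      by (elim nat_less_4_cases) (auto simp: column_block_simps)
  next
    case 6
    then have "filter ?P (prism_word x) = ?F [0, g, Suc g, h]"
      using assms(1) by (intro filter_prism_word_pair) auto
    with assms 6 show ?thesis unfolding alternate_iff_successively
      by (elim nat_less_4_cases) (auto simp: column_block_simps)
  next
    case 7
    then have "filter ?P (prism_word x) = ?F [0, 1, h]"
      using assms(1) by (intro filter_prism_word_pair) auto
    with assms 7 show ?thesis unfolding alternate_iff_successively
      by (elim nat_less_4_cases) (auto simp: column_block_simps)
  qed
qed

lemma alternate_prism_word:
  assumes "4 \<le> x" "g < x" "h < x" "a < 4" "b < 4" "(g, a) \<noteq> (h, b)"
  shows "alternate (prism_word x) (g, a) (h, b) \<longleftrightarrow> prism_adj x (g, a) (h, b)"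
proof (cases "g \<le> h")
  case False
  have "alternate (prism_word x) (g, a) (h, b) \<longleftrightarrow> alternate (prism_word x) (h, b) (g, a)"
    by (rule alternate_commute)
  also have "\<dots> \<longleftrightarrow> prism_adj x (h, b) (g, a)"
    using alternate_prism_word_ordered[of x h g b a] False assms by auto
  also have "\<dots> \<longleftrightarrow> prism_adj x (g, a) (h, b)" by auto
  finally show ?thesis .
qed (use alternate_prism_word_ordered assms in blast)

definition prism_vertex :: "nat \<Rightarrow> nat \<times> nat \<Rightarrow> nat" where
  "prism_vertex x p = fst p + snd p * x"

lemma bij_betw_prism_vertex:
  assumes "0 < x"
  shows "bij_betw (prism_vertex x) {(s, k). s < x \<and> k < 4} {0..<4 * x}"
proof (rule bij_betw_byWitness[where f' = "\<lambda>i. (i mod x, i div x)"])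
  show "prism_vertex x ` {(s, k). s < x \<and> k < 4} \<subseteq> {0..<4 * x}"
  proof clarify
    fix s k :: nat assume "s < x" "k < 4"
    then have "s + k * x < x + 3 * x" by (intro add_less_le_mono mult_le_mono1) simp_all
    then show "prism_vertex x (s, k) \<in> {0..<4 * x}" by (simp add: prism_vertex_def)
  qed
  show "(\<lambda>i. (i mod x, i div x)) ` {0..<4 * x} \<subseteq> {(s, k). s < x \<and> k < 4}"
    using assms by (auto simp: div_less_iff_less_mult mult.commute)
qed (auto simp: prism_vertex_def assms)

lemma circ_adj_prism_vertex:
  assumes "4 \<le> x" "g < x" "h < x" "a < 4" "b < 4"
  shows "circ_adj (4 * x) {1, x, 2 * x} (prism_vertex x (g, a)) (prism_vertex x (h, b)) \<longleftrightarrow>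
    prism_adj x (g, a) (h, b)"
proof -
  have "prism_vertex x (g, a) < 4 * x" "prism_vertex x (h, b) < 4 * x"
    using bij_betw_apply[OF bij_betw_prism_vertex] assms by auto
  then have "circ_adj (4 * x) {1, x, 2 * x} (prism_vertex x (g, a)) (prism_vertex x (h, b)) \<longleftrightarrow>
      (\<exists>r\<in>{1, x, 2 * x}. h + b * x = g + a * x + r \<or> g + a * x = h + b * x + r \<or>
         h + b * x + 4 * x = g + a * x + r \<or> g + a * x + 4 * x = h + b * x + r)"
    by (subst circ_adj_iff) (auto simp: prism_vertex_def)
  also have "\<dots> \<longleftrightarrow> prism_adj x (g, a) (h, b)"
    using assms(4,5) by (elim nat_less_4_cases) (use assms(1-3) in \<open>simp; arith\<close>)+
  finally show ?thesis .
qed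

theorem word_representable_circ_1_x_2x:
  assumes "4 \<le> x"
  shows "word_representable {0..<4 * x} (circ_adj (4 * x) {1, x, 2 * x})"
proof -
  let ?grid = "{(s, k). s < x \<and> k < 4}"
  have bij: "bij_betw (prism_vertex x) ?grid {0..<4 * x}"
    using assms by (intro bij_betw_prism_vertex) simp
  have grid: "set (prism_word x) = ?grid"
    using assms by (intro set_prism_word) simp
  show ?thesis
    unfolding word_representable_def
  proof (intro exI[of _ "map (prism_vertex x) (prism_word x)"] conjI ballI impI)
    show "set (map (prism_vertex x) (prism_word x)) = {0..<4 * x}"
      using bij grid by (simp add: bij_betw_def)
  next
    fix u v assume "u \<in> {0..<4 * x}" "v \<in> {0..<4 * x}" "u \<noteq> v"
    then have "u \<in> prism_vertex x ` ?grid" "v \<in> prism_vertex x ` ?grid"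
      using bij by (simp_all add: bij_betw_def)
    then obtain p p' where uv: "u = prism_vertex x p" "v = prism_vertex x p'"
      and "p \<in> ?grid" "p' \<in> ?grid"
      by (elim imageE)
    with \<open>u \<noteq> v\<close> have "p \<noteq> p'" by blast
    have "set (prism_word x) \<union> {p, p'} = ?grid"
      using grid \<open>p \<in> ?grid\<close> \<open>p' \<in> ?grid\<close> by blast
    then have "alternate (map (prism_vertex x) (prism_word x)) u v \<longleftrightarrow> alternate (prism_word x) p p'"
      unfolding uv using bij_betw_imp_inj_on[OF bij] by (intro alternate_map_inj) simp
    moreover obtain g a h b where "p = (g, a)" "p' = (h, b)" by fastforce
    ultimately show "circ_adj (4 * x) {1, x, 2 * x} u v \<longleftrightarrow>
        alternate (map (prism_vertex x) (prism_word x)) u v"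
      using \<open>p \<in> ?grid\<close> \<open>p' \<in> ?grid\<close> \<open>p \<noteq> p'\<close> assms unfolding uv
      using alternate_prism_word[of x g h a b] circ_adj_prism_vertex[of x g h a b] by simp
  qed
qed

theorem corollary5:
  fixes n x :: nat
  assumes "1 < x" and "x < n"
    and "n mod 3 = 2" and "x mod 3 = 1"
    and "3 * x \<le> 2 * n"
  shows "word_representable (circ_vertices (2 * n)) (circ_adj (2 * n) {1, x, n})"
proof (cases "2 * x = n")
  case True
  obtain q where "x = 3 * q + 1" using assms(4) by (metis div_mult_mod_eq mult.commute)
  with assms(1) have "4 \<le> x" by (cases q) auto
  then show ?thesis
    using word_representable_circ_1_x_2x True unfolding circ_vertices_def by auto
next
  case False
  then obtain K where K: "K mod 6 = 5" "K < 2 * n" "(x * K div (2 * n)) mod 3 = 0"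
    using multiplier_exists assms(3-5) by blast
  interpret three_coloured_graph "circ_vertices (2 * n)" "circ_adj (2 * n) {1, x, n}" "floor_colour (2 * n) K"
  proof
    show "symp (circ_adj (2 * n) {1, x, n})" by (simp add: symp_def circ_adj_commute)
  qed (use circ_adj_floor_colours_differ[OF assms(2-4) K] in \<open>auto simp: circ_vertices_def floor_colour_def\<close>)
  show ?thesis by (rule word_representable)
qed

end
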